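(* Let $(X_{s,t})$ be the INMA$(q_1,q_2)$ random field defined in the context, and let $k,l$ be integers with $0\le k\le q_1$, $0\le l\le q_2$. Then for all $(s,t)\in\mathbb{Z}^2$ and $u_1,u_2\in[-1,1]$, the bivariate pgf $\operatorname{pgf}(u_1,u_2;k,l):=\mathbb{E}\big(u_1^{X_{s,t}}u_2^{X_{s-k,t-l}}\big)$ equals $$\prod_{i=0}^{k-1}\prod_{j=0}^{q_2}\operatorname{pgf}_\varepsilon\big(1+\beta_{ij}(u_1-1)\big)\cdot\prod_{i=k}^{q_1}\prod_{j=0}^{l-1}\operatorname{pgf}_\varepsilon\big(1+\beta_{ij}(u_1-1)\big)$$ $$\cdot\prod_{i=q_1+1}^{q_1+k}\prod_{j=l}^{q_2+l}\operatorname{pgf}_\varepsilon\big(1+\beta_{i-k,j-l}(u_2-1)\big)\cdot\prod_{i=k}^{q_1}\prod_{j=q_2+1}^{q_2+l}\operatorname{pgf}_\varepsilon\big(1+\beta_{i-k,j-l}(u_2-1)\big)$$ $$\cdot\prod_{i=k}^{q_1}\prod_{j=l}^{q_2}\operatorname{pgf}_\varepsilon\Big(1+\beta_{ij}(u_1-1)+\beta_{i-k,j-l}(u_2-1)+p_{(i,j),(i-k,j-l)}\,(u_1-1)(u_2-1)\Big),$$ where empty products equal $1$. (For $k=l=0$ this reduces to the marginal pgf of $X_{s,t}$ evaluated at $u=u_1u_2$.)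
   Context: INMA$(q_1,q_2)$ random field: Fix $q_1,q_2\in\mathbb{N}_0$ with $q_1+q_2\ge 1$ and parameters $\beta_{ij}\in[0,1]$ for $0\le i\le q_1$, $0\le j\le q_2$; put $\beta_\bullet=\sum_{i=0}^{q_1}\sum_{j=0}^{q_2}\beta_{ij}$. Let $(\varepsilon_{s,t})_{s,t\in\mathbb{Z}}$ be i.i.d. random variables with values in $\mathbb{N}_0=\{0,1,2,\dots\}$, finite mean $\mu_\varepsilon$ and finite variance $\sigma_\varepsilon^2$, and let $\operatorname{pgf}_\varepsilon(u)=\mathbb{E}u^{\varepsilon_{s,t}}$. Let $\mathbf{Z}_{s,t;r}=(Z^{(i,j)}_{s,t;r})_{0\le i\le q_1,0\le j\le q_2}$, $s,t\in\mathbb{Z}$, $r\in\mathbb{N}$, be i.i.d. random vectors (distributed as a generic vector $\mathbf{Z}=(Z^{(i,j)})$), independent of $(\varepsilon_{s,t})$, whose components are Bernoulli with $\mathbb{P}(Z^{(i,j)}=1)=\beta_{ij}$; the components within one vector may be arbitrarily dependent. Write $p_{(i,j),(i',j')}:=\mathbb{P}(Z^{(i,j)}=1,\,Z^{(i',j')}=1)$. The binomial thinning of $\varepsilon_{s,t}$ executed at location $(s+i,t+j)$ is $\beta_{ij}\circ_{s+i,t+j}\varepsilon_{s,t}:=\sum_{r=1}^{\varepsilon_{s,t}}Z^{(i,j)}_{s,t;r}$ (empty sum $=0$). The field is $$X_{s,t}=\sum_{i=0}^{q_1}\sum_{j=0}^{q_2}\beta_{ij}\circ_{s,t}\varepsilon_{s-i,t-j}=\sum_{i=0}^{q_1}\sum_{j=0}^{q_2}\sum_{r=1}^{\varepsilon_{s-i,t-j}}Z^{(i,j)}_{s-i,t-j;r}.$$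 *)

theory Defs
  imports "HOL-Probability.Probability"
begin

text \<open>The INMA(q1,q2) field. eps s t is the innovation at (s,t); Z s t r (i,j) is the
 (i,j)-component of the r-th Bernoulli vector attached to site (s,t).
 The thinning beta_ij o_(s+i,t+j) eps_(s,t) is the sum of Z s t r (i,j) for r = 1..eps s t.\<close>

definition thinning :: "(int \<Rightarrow> int \<Rightarrow> nat \<Rightarrow> nat \<times> nat \<Rightarrow> 'a \<Rightarrow> nat)
    \<Rightarrow> int \<Rightarrow> int \<Rightarrow> nat \<Rightarrow> nat \<Rightarrow> nat \<Rightarrow> 'a \<Rightarrow> nat" where
  "thinning Z s t i j n \<omega> = (\<Sum>r\<in>{1..n}. Z s t r (i, j) \<omega>)"

definition INMA_field :: "nat \<Rightarrow> nat \<Rightarrow> (int \<Rightarrow> int \<Rightarrow> 'a \<Rightarrow> nat)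
    \<Rightarrow> (int \<Rightarrow> int \<Rightarrow> nat \<Rightarrow> nat \<times> nat \<Rightarrow> 'a \<Rightarrow> nat) \<Rightarrow> int \<Rightarrow> int \<Rightarrow> 'a \<Rightarrow> nat" where
  "INMA_field q1 q2 eps Z s t \<omega> =
     (\<Sum>i\<le>q1. \<Sum>j\<le>q2. thinning Z (s - int i) (t - int j) i j (eps (s - int i) (t - int j) \<omega>) \<omega>)"

definition Zvec :: "nat \<Rightarrow> nat \<Rightarrow> (int \<Rightarrow> int \<Rightarrow> nat \<Rightarrow> nat \<times> nat \<Rightarrow> 'a \<Rightarrow> nat)
    \<Rightarrow> int \<Rightarrow> int \<Rightarrow> nat \<Rightarrow> 'a \<Rightarrow> (nat \<times> nat \<Rightarrow> nat)" where
  "Zvec q1 q2 Z s t r \<omega> = restrict (\<lambda>ij. Z s t r ij \<omega>) ({..q1} \<times> {..q2})"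

definition pgf :: "'a measure \<Rightarrow> ('a \<Rightarrow> nat) \<Rightarrow> real \<Rightarrow> real" where
  "pgf M Y u = (\<integral>\<omega>. u ^ Y \<omega> \<partial>M)"

text \<open>Generator of the independence structure: the sigma-algebras generated by the
 innovations eps_{s,t} (index Inl (s,t)) and by the vectors Z_{s,t;r} (index Inr (s,t,r)).\<close>
definition INMA_sigmas :: "'a measure \<Rightarrow> nat \<Rightarrow> nat \<Rightarrow> (int \<Rightarrow> int \<Rightarrow> 'a \<Rightarrow> nat)
    \<Rightarrow> (int \<Rightarrow> int \<Rightarrow> nat \<Rightarrow> nat \<times> nat \<Rightarrow> 'a \<Rightarrow> nat)
    \<Rightarrow> (int \<times> int + int \<times> int \<times> nat) \<Rightarrow> 'a set set" where
  "INMA_sigmas M q1 q2 eps Z idx = (case idx of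
      Inl (s, t) \<Rightarrow> {eps s t -` A \<inter> space M | A. True}
    | Inr (s, t, r) \<Rightarrow> {Zvec q1 q2 Z s t r -` B \<inter> space M | B. True})"

end

theory Submission
  imports Defs
begin

(* Both X_{s,t} and X_{s-k,t-l} are sums of thinnings of the innovations eps_{s-i,t-j}, the lags
   (i, j) ranging over two boxes. Hence u1^X_{s,t} * u2^X_{s-k,t-l} is a product, over the lags
   (i, j) in the union of the boxes and the copies r <= eps_{s-i,t-j}, of factors that depend only
   on the Bernoulli vector Z_{s-i,t-j;r}. Conditioning on the innovations (made rigorous by
   truncating them and passing to the limit by bounded convergence), independence turns the
   expectation into a product over the lags of pgf_eps evaluated at the mean of such a factor,
   which is 1 + beta_ij (u1 - 1) + beta_{i-k,j-l} (u2 - 1) + p (u1 - 1) (u2 - 1) on the overlap of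
   the boxes and has only one of the two correction terms elsewhere. Splitting the union of the
   boxes into five rectangles gives the five products of the statement. *)

lemma prod_Inl_Inr_Sigma:
  assumes "finite S" and "\<And>\<sigma>. \<sigma> \<in> S \<Longrightarrow> finite (T \<sigma>)"
  shows "(\<Prod>x\<in>Inl ` S \<union> Inr ` Sigma S T. f x) = (\<Prod>\<sigma>\<in>S. f (Inl \<sigma>) * (\<Prod>r\<in>T \<sigma>. f (Inr (\<sigma>, r))))"
proof -
  have "(\<Prod>x\<in>Inl ` S \<union> Inr ` Sigma S T. f x) = (\<Prod>x\<in>Inl ` S. f x) * (\<Prod>x\<in>Inr ` Sigma S T. f x)"
    using assms by (intro prod.union_disjoint) auto
  also have "\<dots> = (\<Prod>\<sigma>\<in>S. f (Inl \<sigma>)) * (\<Prod>(\<sigma>, r)\<in>Sigma S T. f (Inr (\<sigma>, r)))"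
    by (simp add: prod.reindex case_prod_beta)
  also have "\<dots> = (\<Prod>\<sigma>\<in>S. f (Inl \<sigma>)) * (\<Prod>\<sigma>\<in>S. \<Prod>r\<in>T \<sigma>. f (Inr (\<sigma>, r)))"
    using assms by (simp add: prod.Sigma)
  finally show ?thesis
    by (simp add: prod.distrib)
qed

lemma (in prob_space) indep_sets_reindex:
  assumes indep: "indep_sets F (h ` I)" and inj: "inj_on h I"
  shows "indep_sets (\<lambda>i. F (h i)) I"
proof (rule indep_setsI)
  show "F (h i) \<subseteq> events" if "i \<in> I" for i
    using indep that by (auto simp: indep_sets_def)
next
  fix A J assume J: "J \<noteq> {}" "J \<subseteq> I" "finite J" and A: "\<forall>j\<in>J. A j \<in> F (h j)"
  have inj_J: "inj_on h J"
    using inj J(2) by (rule inj_on_subset)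
  define A' where "A' x = A (the_inv_into J h x)" for x
  have A'_h: "A' (h j) = A j" if "j \<in> J" for j
    using the_inv_into_f_f[OF inj_J that] by (simp add: A'_def)
  have "prob (\<Inter>x\<in>h ` J. A' x) = (\<Prod>x\<in>h ` J. prob (A' x))"
    by (rule indep_setsD[OF indep]) (use J A A'_h in auto)
  then show "prob (\<Inter>j\<in>J. A j) = (\<Prod>j\<in>J. prob (A j))"
    by (simp add: prod.reindex[OF inj_J] A'_h)
qed

lemma (in prob_space) integral_prod_indep_sets:
  fixes F :: "'i \<Rightarrow> 'a \<Rightarrow> real"
  assumes indep: "indep_sets G I" and "finite J" "J \<subseteq> I"
    and integrable: "\<And>j. j \<in> J \<Longrightarrow> integrable M (F j)"
    and vimage: "\<And>j B. j \<in> J \<Longrightarrow> B \<in> sets borel \<Longrightarrow> F j -` B \<inter> space M \<in> G j"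
  shows "(\<integral>\<omega>. (\<Prod>j\<in>J. F j \<omega>) \<partial>M) = (\<Prod>j\<in>J. \<integral>\<omega>. F j \<omega> \<partial>M)"
proof (rule indep_vars_lebesgue_integral[OF \<open>finite J\<close> _ integrable])
  show "indep_vars (\<lambda>_. borel) F J"
    unfolding indep_vars_def2
    using integrable by (auto intro!: indep_sets_mono[OF indep \<open>J \<subseteq> I\<close>] vimage)
qed

lemma (in prob_space) bounded_convergence:
  fixes f :: "nat \<Rightarrow> 'a \<Rightarrow> real"
  assumes "\<And>n. f n \<in> borel_measurable M" and "g \<in> borel_measurable M"
    and "\<And>n \<omega>. \<omega> \<in> space M \<Longrightarrow> \<bar>f n \<omega>\<bar> \<le> B"
    and "\<And>\<omega>. \<omega> \<in> space M \<Longrightarrow> (\<lambda>n. f n \<omega>) \<longlonglongrightarrow> g \<omega>"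
  shows "(\<lambda>n. \<integral>\<omega>. f n \<omega> \<partial>M) \<longlonglongrightarrow> (\<integral>\<omega>. g \<omega> \<partial>M)"
  by (rule integral_dominated_convergence[where w="\<lambda>_. B"]) (use assms in auto)

lemma sum_indicator_level_sets:
  fixes f :: "nat \<Rightarrow> 'b::comm_ring_1"
  assumes "x \<in> A"
  shows "(\<Sum>m<K. indicator {x \<in> A. X x = m} x * f m) = (if X x < K then f (X x) else 0)"
proof -
  have "(\<Sum>m<K. indicator {x \<in> A. X x = m} x * f m) = (\<Sum>m<K. if m = X x then f m else 0)"
    using assms by (intro sum.cong) auto
  then show ?thesis
    by simp
qed

lemma (in prob_space) pgf_sums:
  assumes N: "N \<in> measurable M (count_space UNIV)" and u: "\<bar>u\<bar> \<le> 1"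
  shows "(\<lambda>m. prob {\<omega> \<in> space M. N \<omega> = m} * u ^ m) sums pgf M N u"
proof -
  have events: "{\<omega> \<in> space M. N \<omega> = m} \<in> events" for m
    using N by measurable
  have "(\<Sum>m<n. prob {\<omega> \<in> space M. N \<omega> = m} * u ^ m)
      = (\<Sum>m<n. \<integral>\<omega>. indicator {\<omega> \<in> space M. N \<omega> = m} \<omega> * u ^ m \<partial>M)" for n
    using events by simp
  also have "\<dots> n = (\<integral>\<omega>. (\<Sum>m<n. indicator {\<omega> \<in> space M. N \<omega> = m} \<omega> * u ^ m) \<partial>M)" for n
    using events by (intro Bochner_Integration.integral_sum[symmetric]) (simp add: less_top[symmetric])
  also have "\<dots> n = (\<integral>\<omega>. (if N \<omega> < n then u ^ N \<omega> else 0) \<partial>M)" for n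
    by (intro Bochner_Integration.integral_cong refl) (rule sum_indicator_level_sets)
  finally have partial_sums: "(\<lambda>n. \<Sum>m<n. prob {\<omega> \<in> space M. N \<omega> = m} * u ^ m)
      = (\<lambda>n. \<integral>\<omega>. (if N \<omega> < n then u ^ N \<omega> else 0) \<partial>M)" ..
  have "(\<lambda>n. \<integral>\<omega>. (if N \<omega> < n then u ^ N \<omega> else 0) \<partial>M) \<longlonglongrightarrow> pgf M N u"
    unfolding pgf_def
  proof (rule bounded_convergence[where B=1])
    show "\<bar>if N \<omega> < n then u ^ N \<omega> else 0\<bar> \<le> 1" for n \<omega>
      using u by (simp add: power_abs power_le_one)
    show "(\<lambda>n. if N \<omega> < n then u ^ N \<omega> else 0) \<longlonglongrightarrow> u ^ N \<omega>" for \<omega>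
      by (intro tendsto_eventually eventually_sequentiallyI[of "Suc (N \<omega>)"]) simp
    show "(\<lambda>\<omega>. if N \<omega> < n then u ^ N \<omega> else 0) \<in> borel_measurable M" for n
      using N by measurable
    show "(\<lambda>\<omega>. u ^ N \<omega>) \<in> borel_measurable M"
      using N by measurable
  qed
  then show ?thesis
    unfolding sums_def partial_sums .
qed

lemma (in prob_space) pgf_cong_distribution:
  assumes "N \<in> measurable M (count_space UNIV)" "N' \<in> measurable M (count_space UNIV)"
    and "\<And>m. prob {\<omega> \<in> space M. N \<omega> = m} = prob {\<omega> \<in> space M. N' \<omega> = m}"
    and "\<bar>u\<bar> \<le> 1"
  shows "pgf M N u = pgf M N' u"
  using pgf_sums[of N u] pgf_sums[of N' u] assms by (simp add: sums_unique2)

lemma (in prob_space) expectation_affine_indicators: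
  assumes "A \<in> events" "B \<in> events"
  shows "expectation (\<lambda>\<omega>. (1 + x * indicator A \<omega>) * (1 + y * indicator B \<omega>))
    = 1 + x * prob A + y * prob B + x * y * prob (A \<inter> B)"
proof -
  have "(\<lambda>\<omega>. (1 + x * indicator A \<omega>) * (1 + y * indicator B \<omega>))
      = (\<lambda>\<omega>. 1 + x * indicator A \<omega> + y * indicator B \<omega> + x * y * indicator (A \<inter> B) \<omega> :: real)"
    by (auto simp: indicator_def fun_eq_iff algebra_simps)
  then show ?thesis
    using assms by (simp add: prob_space less_top[symmetric])
qed

locale indep_random_products = prob_space +
  fixes G :: "'i + 'i \<times> nat \<Rightarrow> 'a set set" and S :: "'i set"
    and N :: "'i \<Rightarrow> 'a \<Rightarrow> nat" and Y :: "'i \<Rightarrow> nat \<Rightarrow> 'a \<Rightarrow> real" and c :: "'i \<Rightarrow> real"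
  assumes indep: "indep_sets G (Inl ` S \<union> Inr ` (S \<times> {1..}))"
    and finite_S: "finite S"
    and N_measurable: "\<sigma> \<in> S \<Longrightarrow> N \<sigma> \<in> measurable M (count_space UNIV)"
    and N_vimage: "\<sigma> \<in> S \<Longrightarrow> N \<sigma> -` A \<inter> space M \<in> G (Inl \<sigma>)"
    and Y_measurable: "\<sigma> \<in> S \<Longrightarrow> 1 \<le> r \<Longrightarrow> Y \<sigma> r \<in> borel_measurable M"
    and Y_vimage: "\<sigma> \<in> S \<Longrightarrow> 1 \<le> r \<Longrightarrow> B \<in> sets borel \<Longrightarrow> Y \<sigma> r -` B \<inter> space M \<in> G (Inr (\<sigma>, r))"
    and Y_bounded: "\<sigma> \<in> S \<Longrightarrow> 1 \<le> r \<Longrightarrow> \<omega> \<in> space M \<Longrightarrow> \<bar>Y \<sigma> r \<omega>\<bar> \<le> 1"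
    and Y_expectation: "\<sigma> \<in> S \<Longrightarrow> 1 \<le> r \<Longrightarrow> expectation (Y \<sigma> r) = c \<sigma>"
begin

lemma N_events: "\<sigma> \<in> S \<Longrightarrow> {\<omega> \<in> space M. P (N \<sigma> \<omega>)} \<in> events"
  using N_measurable by measurable

lemma Y_integrable: "\<sigma> \<in> S \<Longrightarrow> 1 \<le> r \<Longrightarrow> integrable M (Y \<sigma> r)"
  using Y_measurable Y_bounded by (intro integrable_const_bound[where B=1]) auto

lemma c_bounded:
  assumes "\<sigma> \<in> S"
  shows "\<bar>c \<sigma>\<bar> \<le> 1"
proof -
  have "-1 \<le> expectation (Y \<sigma> 1)" "expectation (Y \<sigma> 1) \<le> 1"
    using assms Y_bounded Y_integrable by (auto intro!: integral_ge_const integral_le_const simp: abs_le_iff)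
  then show ?thesis
    using Y_expectation[OF assms] by simp
qed

lemma partial_product_measurable:
  "\<sigma> \<in> S \<Longrightarrow> (\<lambda>\<omega>. \<Prod>r\<in>{1..n}. Y \<sigma> r \<omega>) \<in> borel_measurable M"
  by (intro borel_measurable_prod) (auto intro: Y_measurable)

lemma partial_product_bounded:
  "\<sigma> \<in> S \<Longrightarrow> \<omega> \<in> space M \<Longrightarrow> \<bar>\<Prod>r\<in>{1..n}. Y \<sigma> r \<omega>\<bar> \<le> 1"
  unfolding abs_prod by (intro prod_le_1) (auto intro: Y_bounded)

lemma random_product_measurable:
  "\<sigma> \<in> S \<Longrightarrow> (\<lambda>\<omega>. \<Prod>r\<in>{1..N \<sigma> \<omega>}. Y \<sigma> r \<omega>) \<in> borel_measurable M"
  by (rule measurable_compose_countable'[where I=UNIV, OF partial_product_measurable N_measurable]) auto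

lemma integral_prod_fixed_counts:
  "(\<integral>\<omega>. (\<Prod>\<sigma>\<in>S. indicator {\<omega> \<in> space M. N \<sigma> \<omega> = n \<sigma>} \<omega> * (\<Prod>r\<in>{1..n \<sigma>}. Y \<sigma> r \<omega>)) \<partial>M)
     = (\<Prod>\<sigma>\<in>S. prob {\<omega> \<in> space M. N \<sigma> \<omega> = n \<sigma>} * c \<sigma> ^ n \<sigma>)"
proof -
  define J where "J = Inl ` S \<union> Inr ` Sigma S (\<lambda>\<sigma>. {1..n \<sigma>})"
  define F where "F = case_sum (\<lambda>\<sigma>. indicator {\<omega> \<in> space M. N \<sigma> \<omega> = n \<sigma>}) (\<lambda>(\<sigma>, r). Y \<sigma> r)"
  have "(\<integral>\<omega>. (\<Prod>j\<in>J. F j \<omega>) \<partial>M) = (\<Prod>j\<in>J. \<integral>\<omega>. F j \<omega> \<partial>M)"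
  proof (rule integral_prod_indep_sets[OF indep])
    show "finite J" "J \<subseteq> Inl ` S \<union> Inr ` (S \<times> {1..})"
      using finite_S by (auto simp: J_def)
    show "integrable M (F j)" if "j \<in> J" for j
      using that N_events Y_integrable
      by (auto simp: J_def F_def less_top[symmetric])
    show "F j -` B \<inter> space M \<in> G j" if "j \<in> J" "B \<in> sets borel" for j B
    proof (cases j)
      case (Inl \<sigma>)
      have "\<sigma> \<in> S"
        using that by (auto simp: J_def Inl)
      have vimage_eq: "F (Inl \<sigma>) -` B \<inter> space M = N \<sigma> -` {m. (if m = n \<sigma> then 1 else 0) \<in> B} \<inter> space M"
        by (auto simp: F_def indicator_def)
      show ?thesis
        unfolding Inl vimage_eq by (rule N_vimage[OF \<open>\<sigma> \<in> S\<close>])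
    qed (use that Y_vimage in \<open>auto simp: J_def F_def\<close>)
  qed
  then show ?thesis
    using finite_S N_events
    by (simp add: J_def F_def prod_Inl_Inr_Sigma Y_expectation prod.distrib)
qed

lemma integral_prod_truncated:
  "(\<integral>\<omega>. (\<Prod>\<sigma>\<in>S. if N \<sigma> \<omega> < K then \<Prod>r\<in>{1..N \<sigma> \<omega>}. Y \<sigma> r \<omega> else 0) \<partial>M)
     = (\<Prod>\<sigma>\<in>S. \<Sum>m<K. prob {\<omega> \<in> space M. N \<sigma> \<omega> = m} * c \<sigma> ^ m)"
proof -
  define H where "H n \<omega> = (\<Prod>\<sigma>\<in>S. indicator {\<omega> \<in> space M. N \<sigma> \<omega> = n \<sigma>} \<omega> * (\<Prod>r\<in>{1..n \<sigma>}. Y \<sigma> r \<omega>))"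
    for n \<omega>
  have H_integrable: "integrable M (H n)" for n
  proof (rule integrable_const_bound[where B=1])
    show "H n \<in> borel_measurable M"
      unfolding H_def using N_events
      by (intro borel_measurable_prod borel_measurable_times partial_product_measurable) auto
    show "AE \<omega> in M. norm (H n \<omega>) \<le> 1"
      unfolding H_def abs_prod real_norm_def using partial_product_bounded
      by (intro AE_I2 prod_le_1) (auto simp: abs_mult indicator_def)
  qed
  have "(\<Prod>\<sigma>\<in>S. if N \<sigma> \<omega> < K then \<Prod>r\<in>{1..N \<sigma> \<omega>}. Y \<sigma> r \<omega> else 0)
      = (\<Sum>n\<in>PiE S (\<lambda>_. {..<K}). H n \<omega>)" if "\<omega> \<in> space M" for \<omega>
  proof -
    have "(\<Prod>\<sigma>\<in>S. if N \<sigma> \<omega> < K then \<Prod>r\<in>{1..N \<sigma> \<omega>}. Y \<sigma> r \<omega> else 0)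
        = (\<Prod>\<sigma>\<in>S. \<Sum>m<K. indicator {\<omega> \<in> space M. N \<sigma> \<omega> = m} \<omega> * (\<Prod>r\<in>{1..m}. Y \<sigma> r \<omega>))"
      using that by (simp only: sum_indicator_level_sets)
    also have "\<dots> = (\<Sum>n\<in>PiE S (\<lambda>_. {..<K}). H n \<omega>)"
      unfolding H_def using finite_S by (rule prod_sum_PiE) simp
    finally show ?thesis .
  qed
  then have "(\<integral>\<omega>. (\<Prod>\<sigma>\<in>S. if N \<sigma> \<omega> < K then \<Prod>r\<in>{1..N \<sigma> \<omega>}. Y \<sigma> r \<omega> else 0) \<partial>M)
      = (\<integral>\<omega>. (\<Sum>n\<in>PiE S (\<lambda>_. {..<K}). H n \<omega>) \<partial>M)"
    by (intro Bochner_Integration.integral_cong) auto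
  also have "\<dots> = (\<Sum>n\<in>PiE S (\<lambda>_. {..<K}). \<integral>\<omega>. H n \<omega> \<partial>M)"
    using H_integrable by (rule Bochner_Integration.integral_sum)
  also have "\<dots> = (\<Sum>n\<in>PiE S (\<lambda>_. {..<K}). \<Prod>\<sigma>\<in>S. prob {\<omega> \<in> space M. N \<sigma> \<omega> = n \<sigma>} * c \<sigma> ^ n \<sigma>)"
    unfolding H_def integral_prod_fixed_counts ..
  also have "\<dots> = (\<Prod>\<sigma>\<in>S. \<Sum>m<K. prob {\<omega> \<in> space M. N \<sigma> \<omega> = m} * c \<sigma> ^ m)"
    using finite_S by (simp add: prod_sum_PiE)
  finally show ?thesis .
qed

lemma integral_prod_random_products:
  "(\<integral>\<omega>. (\<Prod>\<sigma>\<in>S. \<Prod>r\<in>{1..N \<sigma> \<omega>}. Y \<sigma> r \<omega>) \<partial>M) = (\<Prod>\<sigma>\<in>S. pgf M (N \<sigma>) (c \<sigma>))"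
proof (rule LIMSEQ_unique)
  show "(\<lambda>K. \<integral>\<omega>. (\<Prod>\<sigma>\<in>S. if N \<sigma> \<omega> < K then \<Prod>r\<in>{1..N \<sigma> \<omega>}. Y \<sigma> r \<omega> else 0) \<partial>M)
      \<longlonglongrightarrow> (\<integral>\<omega>. (\<Prod>\<sigma>\<in>S. \<Prod>r\<in>{1..N \<sigma> \<omega>}. Y \<sigma> r \<omega>) \<partial>M)"
  proof (rule bounded_convergence[where B=1])
    show "(\<lambda>\<omega>. \<Prod>\<sigma>\<in>S. if N \<sigma> \<omega> < K then \<Prod>r\<in>{1..N \<sigma> \<omega>}. Y \<sigma> r \<omega> else 0) \<in> borel_measurable M" for K
      using N_events by (intro borel_measurable_prod measurable_If random_product_measurable) auto
    show "(\<lambda>\<omega>. \<Prod>\<sigma>\<in>S. \<Prod>r\<in>{1..N \<sigma> \<omega>}. Y \<sigma> r \<omega>) \<in> borel_measurable M"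
      using random_product_measurable by (intro borel_measurable_prod)
    show "\<bar>\<Prod>\<sigma>\<in>S. if N \<sigma> \<omega> < K then \<Prod>r\<in>{1..N \<sigma> \<omega>}. Y \<sigma> r \<omega> else 0\<bar> \<le> 1"
      if "\<omega> \<in> space M" for K \<omega>
      unfolding abs_prod using that partial_product_bounded by (intro prod_le_1) auto
    show "(\<lambda>K. \<Prod>\<sigma>\<in>S. if N \<sigma> \<omega> < K then \<Prod>r\<in>{1..N \<sigma> \<omega>}. Y \<sigma> r \<omega> else 0)
        \<longlonglongrightarrow> (\<Prod>\<sigma>\<in>S. \<Prod>r\<in>{1..N \<sigma> \<omega>}. Y \<sigma> r \<omega>)" for \<omega>
    proof (rule tendsto_prod)
      fix \<sigma>
      show "(\<lambda>K. if N \<sigma> \<omega> < K then \<Prod>r\<in>{1..N \<sigma> \<omega>}. Y \<sigma> r \<omega> else 0) \<longlonglongrightarrow> (\<Prod>r\<in>{1..N \<sigma> \<omega>}. Y \<sigma> r \<omega>)"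
        by (intro tendsto_eventually eventually_sequentiallyI[of "Suc (N \<sigma> \<omega>)"]) simp
    qed
  qed
  show "(\<lambda>K. \<integral>\<omega>. (\<Prod>\<sigma>\<in>S. if N \<sigma> \<omega> < K then \<Prod>r\<in>{1..N \<sigma> \<omega>}. Y \<sigma> r \<omega> else 0) \<partial>M)
      \<longlonglongrightarrow> (\<Prod>\<sigma>\<in>S. pgf M (N \<sigma>) (c \<sigma>))"
    unfolding integral_prod_truncated
    by (intro tendsto_prod pgf_sums[THEN sums_def[THEN iffD1]] N_measurable c_bounded)
qed

end

(* (i, j) \<in> lag_box q1 q2 k l iff the innovation at (s - i, t - j) enters X_{s-k,t-l}. *)
definition lag_box :: "nat \<Rightarrow> nat \<Rightarrow> nat \<Rightarrow> nat \<Rightarrow> (nat \<times> nat) set" where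
  "lag_box q1 q2 k l = {k..q1 + k} \<times> {l..q2 + l}"

lemma finite_lag_box [simp]: "finite (lag_box q1 q2 k l)"
  by (simp add: lag_box_def)

lemma mem_lag_box_iff: "(i, j) \<in> lag_box q1 q2 k l \<longleftrightarrow> k \<le> i \<and> l \<le> j \<and> i - k \<le> q1 \<and> j - l \<le> q2"
  by (auto simp: lag_box_def)

lemma INMA_field_lag_box:
  "INMA_field q1 q2 eps Z (s - int k) (t - int l) \<omega> =
     (\<Sum>(i, j)\<in>lag_box q1 q2 k l.
        thinning Z (s - int i) (t - int j) (i - k) (j - l) (eps (s - int i) (t - int j) \<omega>) \<omega>)"
proof -
  let ?f = "\<lambda>i j. thinning Z (s - int i) (t - int j) (i - k) (j - l) (eps (s - int i) (t - int j) \<omega>) \<omega>"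
  have "(\<Sum>(i, j)\<in>lag_box q1 q2 k l. ?f i j) = (\<Sum>i\<in>{0 + k..q1 + k}. \<Sum>j\<in>{0 + l..q2 + l}. ?f i j)"
    by (simp add: lag_box_def sum.cartesian_product)
  also have "\<dots> = (\<Sum>i\<in>{0..q1}. \<Sum>j\<in>{0..q2}. ?f (i + k) (j + l))"
    by (simp only: sum.shift_bounds_cl_nat_ivl)
  finally show ?thesis
    by (simp add: INMA_field_def atMost_atLeast0 algebra_simps)
qed

lemma power_INMA_field:
  "u ^ INMA_field q1 q2 eps Z (s - int k) (t - int l) \<omega> =
     (\<Prod>(i, j)\<in>lag_box q1 q2 k l. \<Prod>r\<in>{1..eps (s - int i) (t - int j) \<omega>}.
        u ^ Z (s - int i) (t - int j) r (i - k, j - l) \<omega>)"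
  by (simp add: INMA_field_lag_box thinning_def power_sum case_prod_beta)

(* The factor contributed by one Bernoulli vector z = Z_{s-i,t-j;r} to u1^X_{s,t} * u2^X_{s-k,t-l}. *)
definition joint_factor ::
    "nat \<Rightarrow> nat \<Rightarrow> nat \<Rightarrow> nat \<Rightarrow> real \<Rightarrow> real \<Rightarrow> nat \<Rightarrow> nat \<Rightarrow> (nat \<times> nat \<Rightarrow> nat) \<Rightarrow> real" where
  "joint_factor q1 q2 k l u1 u2 i j z =
     (if (i, j) \<in> lag_box q1 q2 0 0 then u1 ^ z (i, j) else 1) *
     (if (i, j) \<in> lag_box q1 q2 k l then u2 ^ z (i - k, j - l) else 1)"

lemma joint_factor_restrict:
  "joint_factor q1 q2 k l u1 u2 i j (restrict z ({..q1} \<times> {..q2})) = joint_factor q1 q2 k l u1 u2 i j z"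
  by (auto simp: joint_factor_def lag_box_def)

lemma abs_joint_factor_le:
  "\<bar>u1\<bar> \<le> 1 \<Longrightarrow> \<bar>u2\<bar> \<le> 1 \<Longrightarrow> \<bar>joint_factor q1 q2 k l u1 u2 i j z\<bar> \<le> 1"
  by (auto simp: joint_factor_def abs_mult power_abs intro!: mult_le_one power_le_one)

lemma power_INMA_field_pair:
  "u1 ^ INMA_field q1 q2 eps Z s t \<omega> * u2 ^ INMA_field q1 q2 eps Z (s - int k) (t - int l) \<omega> =
     (\<Prod>(i, j)\<in>lag_box q1 q2 0 0 \<union> lag_box q1 q2 k l. \<Prod>r\<in>{1..eps (s - int i) (t - int j) \<omega>}.
        joint_factor q1 q2 k l u1 u2 i j (\<lambda>\<kappa>. Z (s - int i) (t - int j) r \<kappa> \<omega>))"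
proof -
  let ?D = "lag_box q1 q2 0 0 \<union> lag_box q1 q2 k l"
  have extend: "prod f A = (\<Prod>\<kappa>\<in>?D. if \<kappa> \<in> A then f \<kappa> else 1)" if "A \<subseteq> ?D" for A and f :: "nat \<times> nat \<Rightarrow> real"
    using prod.inter_restrict[of ?D f A] that by (simp add: Int_absorb1)
  have factor1: "u1 ^ INMA_field q1 q2 eps Z s t \<omega> = (\<Prod>(i, j)\<in>?D. if (i, j) \<in> lag_box q1 q2 0 0
      then \<Prod>r\<in>{1..eps (s - int i) (t - int j) \<omega>}. u1 ^ Z (s - int i) (t - int j) r (i, j) \<omega> else 1)"
  proof -
    have "u1 ^ INMA_field q1 q2 eps Z s t \<omega> = u1 ^ INMA_field q1 q2 eps Z (s - int 0) (t - int 0) \<omega>"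
      by simp
    also have "\<dots> = (\<Prod>(i, j)\<in>lag_box q1 q2 0 0. \<Prod>r\<in>{1..eps (s - int i) (t - int j) \<omega>}.
        u1 ^ Z (s - int i) (t - int j) r (i - 0, j - 0) \<omega>)"
      by (rule power_INMA_field)
    also have "\<dots> = (\<Prod>(i, j)\<in>?D. if (i, j) \<in> lag_box q1 q2 0 0
        then \<Prod>r\<in>{1..eps (s - int i) (t - int j) \<omega>}. u1 ^ Z (s - int i) (t - int j) r (i, j) \<omega> else 1)"
      by (subst extend) (auto simp: case_prod_beta intro!: prod.cong)
    finally show ?thesis .
  qed
  have factor2: "u2 ^ INMA_field q1 q2 eps Z (s - int k) (t - int l) \<omega> = (\<Prod>(i, j)\<in>?D. if (i, j) \<in> lag_box q1 q2 k l
      then \<Prod>r\<in>{1..eps (s - int i) (t - int j) \<omega>}. u2 ^ Z (s - int i) (t - int j) r (i - k, j - l) \<omega> else 1)"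
    unfolding power_INMA_field by (subst extend) (auto simp: case_prod_beta intro!: prod.cong)
  show ?thesis
    unfolding factor1 factor2 prod.distrib[symmetric]
    by (intro prod.cong) (auto simp: joint_factor_def prod.distrib)
qed

(* The mean of joint_factor when p i j i' j' is the probability that components (i, j) and
   (i', j') of a Bernoulli vector are both 1. *)
definition joint_coeff ::
    "nat \<Rightarrow> nat \<Rightarrow> nat \<Rightarrow> nat \<Rightarrow> (nat \<Rightarrow> nat \<Rightarrow> real) \<Rightarrow> (nat \<Rightarrow> nat \<Rightarrow> nat \<Rightarrow> nat \<Rightarrow> real)
      \<Rightarrow> real \<Rightarrow> real \<Rightarrow> nat \<Rightarrow> nat \<Rightarrow> real" where
  "joint_coeff q1 q2 k l beta p u1 u2 i j =
     (let x1 = if (i, j) \<in> lag_box q1 q2 0 0 then u1 - 1 else 0;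
          x2 = if (i, j) \<in> lag_box q1 q2 k l then u2 - 1 else 0
      in 1 + beta i j * x1 + beta (i - k) (j - l) * x2 + p i j (i - k) (j - l) * x1 * x2)"

lemma prod_cartesian_cong:
  "(\<And>i j. i \<in> I \<Longrightarrow> j \<in> J \<Longrightarrow> g (i, j) = h i j) \<Longrightarrow> prod g (I \<times> J) = (\<Prod>i\<in>I. \<Prod>j\<in>J. h i j)"
  unfolding prod.cartesian_product by (intro prod.cong) auto

lemma joint_coeff_first_only:
  "(i, j) \<in> lag_box q1 q2 0 0 - lag_box q1 q2 k l \<Longrightarrow>
     joint_coeff q1 q2 k l beta p u1 u2 i j = 1 + beta i j * (u1 - 1)"
  by (simp add: joint_coeff_def Let_def)

lemma joint_coeff_second_only:
  "(i, j) \<in> lag_box q1 q2 k l - lag_box q1 q2 0 0 \<Longrightarrow>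
     joint_coeff q1 q2 k l beta p u1 u2 i j = 1 + beta (i - k) (j - l) * (u2 - 1)"
  by (simp add: joint_coeff_def Let_def)

lemma joint_coeff_both:
  "(i, j) \<in> lag_box q1 q2 0 0 \<inter> lag_box q1 q2 k l \<Longrightarrow>
     joint_coeff q1 q2 k l beta p u1 u2 i j = 1 + beta i j * (u1 - 1) + beta (i - k) (j - l) * (u2 - 1)
       + p i j (i - k) (j - l) * (u1 - 1) * (u2 - 1)"
  by (simp add: joint_coeff_def Let_def)

lemma prod_lag_boxes_joint_coeff:
  fixes f :: "real \<Rightarrow> real"
  assumes "k \<le> q1" "l \<le> q2"
  shows "(\<Prod>(i, j)\<in>lag_box q1 q2 0 0 \<union> lag_box q1 q2 k l. f (joint_coeff q1 q2 k l beta p u1 u2 i j)) =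
      (\<Prod>i\<in>{0..<k}. \<Prod>j\<in>{0..q2}. f (1 + beta i j * (u1 - 1)))
      * (\<Prod>i\<in>{k..q1}. \<Prod>j\<in>{0..<l}. f (1 + beta i j * (u1 - 1)))
      * (\<Prod>i\<in>{q1+1..q1+k}. \<Prod>j\<in>{l..q2+l}. f (1 + beta (i - k) (j - l) * (u2 - 1)))
      * (\<Prod>i\<in>{k..q1}. \<Prod>j\<in>{q2+1..q2+l}. f (1 + beta (i - k) (j - l) * (u2 - 1)))
      * (\<Prod>i\<in>{k..q1}. \<Prod>j\<in>{l..q2}.
           f (1 + beta i j * (u1 - 1) + beta (i - k) (j - l) * (u2 - 1)
                + p i j (i - k) (j - l) * (u1 - 1) * (u2 - 1)))"
proof -
  let ?g = "\<lambda>(i, j). f (joint_coeff q1 q2 k l beta p u1 u2 i j)"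
  let ?D1 = "lag_box q1 q2 0 0" and ?D2 = "lag_box q1 q2 k l"
  have "prod ?g (?D1 \<union> ?D2) = prod ?g (?D1 - ?D2) * prod ?g (?D2 - ?D1) * prod ?g (?D1 \<inter> ?D2)"
    by (rule prod.union_diff2) simp_all
  also have "?D1 - ?D2 = {0..<k} \<times> {0..q2} \<union> {k..q1} \<times> {0..<l}"
    using assms by (auto simp: lag_box_def)
  also have "?D2 - ?D1 = {q1+1..q1+k} \<times> {l..q2+l} \<union> {k..q1} \<times> {q2+1..q2+l}"
    using assms by (auto simp: lag_box_def)
  also have "?D1 \<inter> ?D2 = {k..q1} \<times> {l..q2}"
    by (auto simp: lag_box_def)
  also have "prod ?g ({0..<k} \<times> {0..q2} \<union> {k..q1} \<times> {0..<l})
      = prod ?g ({0..<k} \<times> {0..q2}) * prod ?g ({k..q1} \<times> {0..<l})"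
    by (rule prod.union_disjoint) auto
  also have "prod ?g ({q1+1..q1+k} \<times> {l..q2+l} \<union> {k..q1} \<times> {q2+1..q2+l})
      = prod ?g ({q1+1..q1+k} \<times> {l..q2+l}) * prod ?g ({k..q1} \<times> {q2+1..q2+l})"
    by (rule prod.union_disjoint) auto
  also have "prod ?g ({0..<k} \<times> {0..q2}) = (\<Prod>i\<in>{0..<k}. \<Prod>j\<in>{0..q2}. f (1 + beta i j * (u1 - 1)))"
    by (intro prod_cartesian_cong, simp, subst joint_coeff_first_only) (use assms in \<open>auto simp: lag_box_def\<close>)
  also have "prod ?g ({k..q1} \<times> {0..<l}) = (\<Prod>i\<in>{k..q1}. \<Prod>j\<in>{0..<l}. f (1 + beta i j * (u1 - 1)))"
    by (intro prod_cartesian_cong, simp, subst joint_coeff_first_only) (use assms in \<open>auto simp: lag_box_def\<close>)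
  also have "prod ?g ({q1+1..q1+k} \<times> {l..q2+l})
      = (\<Prod>i\<in>{q1+1..q1+k}. \<Prod>j\<in>{l..q2+l}. f (1 + beta (i - k) (j - l) * (u2 - 1)))"
    by (intro prod_cartesian_cong, simp, subst joint_coeff_second_only) (use assms in \<open>auto simp: lag_box_def\<close>)
  also have "prod ?g ({k..q1} \<times> {q2+1..q2+l})
      = (\<Prod>i\<in>{k..q1}. \<Prod>j\<in>{q2+1..q2+l}. f (1 + beta (i - k) (j - l) * (u2 - 1)))"
    by (intro prod_cartesian_cong, simp, subst joint_coeff_second_only) (use assms in \<open>auto simp: lag_box_def\<close>)
  also have "prod ?g ({k..q1} \<times> {l..q2}) = (\<Prod>i\<in>{k..q1}. \<Prod>j\<in>{l..q2}.
      f (1 + beta i j * (u1 - 1) + beta (i - k) (j - l) * (u2 - 1) + p i j (i - k) (j - l) * (u1 - 1) * (u2 - 1)))"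
    by (intro prod_cartesian_cong, simp, subst joint_coeff_both) (auto simp: lag_box_def)
  finally show ?thesis
    by (simp only: mult.assoc)
qed

definition lag_index :: "int \<Rightarrow> int \<Rightarrow> nat \<times> nat + (nat \<times> nat) \<times> nat \<Rightarrow> int \<times> int + int \<times> int \<times> nat" where
  "lag_index s t = case_sum (\<lambda>(i, j). Inl (s - int i, t - int j)) (\<lambda>((i, j), r). Inr (s - int i, t - int j, r))"

locale INMA_model = prob_space M for M :: "'a measure" +
  fixes q1 q2 :: nat and beta :: "nat \<Rightarrow> nat \<Rightarrow> real"
    and eps :: "int \<Rightarrow> int \<Rightarrow> 'a \<Rightarrow> nat" and Z :: "int \<Rightarrow> int \<Rightarrow> nat \<Rightarrow> nat \<times> nat \<Rightarrow> 'a \<Rightarrow> nat"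
  assumes eps_measurable: "eps s t \<in> measurable M (count_space UNIV)"
    and Z_measurable: "Z s t r (i, j) \<in> measurable M (count_space UNIV)"
    and Z_01: "\<omega> \<in> space M \<Longrightarrow> i \<le> q1 \<Longrightarrow> j \<le> q2 \<Longrightarrow> Z s t r (i, j) \<omega> \<in> {0, 1}"
    and Z_bernoulli: "1 \<le> r \<Longrightarrow> i \<le> q1 \<Longrightarrow> j \<le> q2 \<Longrightarrow> prob {\<omega> \<in> space M. Z s t r (i, j) \<omega> = 1} = beta i j"
    and eps_identical: "prob {\<omega> \<in> space M. eps s t \<omega> \<in> A} = prob {\<omega> \<in> space M. eps 0 0 \<omega> \<in> A}"
    and Zvec_identical: "1 \<le> r \<Longrightarrow>
      prob {\<omega> \<in> space M. Zvec q1 q2 Z s t r \<omega> \<in> B} = prob {\<omega> \<in> space M. Zvec q1 q2 Z 0 0 1 \<omega> \<in> B}"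
    and indep: "indep_sets (INMA_sigmas M q1 q2 eps Z) (range Inl \<union> Inr ` {(s, t, r). 1 \<le> r})"
begin

abbreviation pair_prob :: "nat \<Rightarrow> nat \<Rightarrow> nat \<Rightarrow> nat \<Rightarrow> real" where
  "pair_prob i j i' j' \<equiv> prob {\<omega> \<in> space M. Z 0 0 1 (i, j) \<omega> = 1 \<and> Z 0 0 1 (i', j') \<omega> = 1}"

lemma Z_measurable' [measurable]: "Z s t r \<kappa> \<in> measurable M (count_space UNIV)"
  using Z_measurable[of s t r "fst \<kappa>" "snd \<kappa>"] by simp

lemma power_Z:
  fixes u :: real
  assumes "\<omega> \<in> space M" "i \<le> q1" "j \<le> q2"
  shows "u ^ Z s t r (i, j) \<omega> = 1 + (u - 1) * indicator {\<omega> \<in> space M. Z s t r (i, j) \<omega> = 1} \<omega>"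
  using Z_01[OF assms, of s t r] assms(1) by auto

lemma prob_pair_success:
  assumes "1 \<le> r" "i \<le> q1" "j \<le> q2" "i' \<le> q1" "j' \<le> q2"
  shows "prob {\<omega> \<in> space M. Z s t r (i, j) \<omega> = 1 \<and> Z s t r (i', j') \<omega> = 1} = pair_prob i j i' j'"
proof -
  let ?B = "{z. z (i, j) = 1 \<and> z (i', j') = 1}"
  have "prob {\<omega> \<in> space M. Z s t r (i, j) \<omega> = 1 \<and> Z s t r (i', j') \<omega> = 1}
      = prob {\<omega> \<in> space M. Zvec q1 q2 Z s t r \<omega> \<in> ?B}"
    using assms by (intro arg_cong[where f=prob]) (auto simp: Zvec_def)
  also have "\<dots> = prob {\<omega> \<in> space M. Zvec q1 q2 Z 0 0 1 \<omega> \<in> ?B}"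
    by (rule Zvec_identical[OF assms(1)])
  also have "\<dots> = pair_prob i j i' j'"
    using assms by (intro arg_cong[where f=prob]) (auto simp: Zvec_def)
  finally show ?thesis .
qed

lemma expectation_joint_factor:
  assumes "1 \<le> r"
  shows "expectation (\<lambda>\<omega>. joint_factor q1 q2 k l u1 u2 i j (\<lambda>\<kappa>. Z s t r \<kappa> \<omega>))
    = joint_coeff q1 q2 k l beta pair_prob u1 u2 i j"
proof -
  define x1 where "x1 = (if (i, j) \<in> lag_box q1 q2 0 0 then u1 - 1 else 0)"
  define x2 where "x2 = (if (i, j) \<in> lag_box q1 q2 k l then u2 - 1 else 0)"
  define A1 where "A1 = {\<omega> \<in> space M. Z s t r (i, j) \<omega> = 1}"
  define A2 where "A2 = {\<omega> \<in> space M. Z s t r (i - k, j - l) \<omega> = 1}"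
  have "joint_factor q1 q2 k l u1 u2 i j (\<lambda>\<kappa>. Z s t r \<kappa> \<omega>) = (1 + x1 * indicator A1 \<omega>) * (1 + x2 * indicator A2 \<omega>)"
    if "\<omega> \<in> space M" for \<omega>
    using that by (simp add: joint_factor_def x1_def x2_def A1_def A2_def mem_lag_box_iff power_Z)
  then have "expectation (\<lambda>\<omega>. joint_factor q1 q2 k l u1 u2 i j (\<lambda>\<kappa>. Z s t r \<kappa> \<omega>))
      = expectation (\<lambda>\<omega>. (1 + x1 * indicator A1 \<omega>) * (1 + x2 * indicator A2 \<omega>))"
    by (intro Bochner_Integration.integral_cong) auto
  also have "\<dots> = 1 + x1 * prob A1 + x2 * prob A2 + x1 * x2 * prob (A1 \<inter> A2)"
    by (rule expectation_affine_indicators) (simp_all add: A1_def A2_def)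
  also have "x1 * prob A1 = beta i j * x1"
    using Z_bernoulli[OF assms, of i j s t] by (auto simp: x1_def A1_def mem_lag_box_iff)
  also have "x2 * prob A2 = beta (i - k) (j - l) * x2"
    using Z_bernoulli[OF assms, of "i - k" "j - l" s t] by (auto simp: x2_def A2_def mem_lag_box_iff)
  also have "x1 * x2 * prob (A1 \<inter> A2) = pair_prob i j (i - k) (j - l) * x1 * x2"
  proof -
    have "A1 \<inter> A2 = {\<omega> \<in> space M. Z s t r (i, j) \<omega> = 1 \<and> Z s t r (i - k, j - l) \<omega> = 1}"
      by (auto simp: A1_def A2_def)
    then show ?thesis
      using prob_pair_success[OF assms, of i j "i - k" "j - l" s t] by (auto simp: x1_def x2_def mem_lag_box_iff)
  qed
  also have "1 + beta i j * x1 + beta (i - k) (j - l) * x2 + pair_prob i j (i - k) (j - l) * x1 * x2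
      = joint_coeff q1 q2 k l beta pair_prob u1 u2 i j"
    by (simp only: joint_coeff_def x1_def x2_def Let_def)
  finally show ?thesis .
qed

lemma indep_random_products_lag_boxes:
  assumes "\<bar>u1\<bar> \<le> 1" "\<bar>u2\<bar> \<le> 1"
  shows "indep_random_products M (\<lambda>x. INMA_sigmas M q1 q2 eps Z (lag_index s t x))
    (lag_box q1 q2 0 0 \<union> lag_box q1 q2 k l) (\<lambda>(i, j). eps (s - int i) (t - int j))
    (\<lambda>(i, j) r \<omega>. joint_factor q1 q2 k l u1 u2 i j (\<lambda>\<kappa>. Z (s - int i) (t - int j) r \<kappa> \<omega>))
    (\<lambda>(i, j). joint_coeff q1 q2 k l beta pair_prob u1 u2 i j)"
proof unfold_locales
  let ?D = "lag_box q1 q2 0 0 \<union> lag_box q1 q2 k l"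
  show "indep_sets (\<lambda>x. INMA_sigmas M q1 q2 eps Z (lag_index s t x)) (Inl ` ?D \<union> Inr ` (?D \<times> {1..}))"
  proof (rule indep_sets_reindex[where F="INMA_sigmas M q1 q2 eps Z" and h="lag_index s t"])
    show "inj_on (lag_index s t) (Inl ` ?D \<union> Inr ` (?D \<times> {1..}))"
      by (auto simp: lag_index_def inj_on_def)
    show "indep_sets (INMA_sigmas M q1 q2 eps Z) (lag_index s t ` (Inl ` ?D \<union> Inr ` (?D \<times> {1..})))"
      by (rule indep_sets_mono_index[OF _ indep]) (auto simp: lag_index_def)
  qed
  show "(case \<sigma> of (i, j) \<Rightarrow> eps (s - int i) (t - int j)) -` A \<inter> space M
      \<in> INMA_sigmas M q1 q2 eps Z (lag_index s t (Inl \<sigma>))" for \<sigma> A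
    by (auto simp: lag_index_def INMA_sigmas_def split: prod.splits)
  show "(case \<sigma> of (i, j) \<Rightarrow> \<lambda>r \<omega>. joint_factor q1 q2 k l u1 u2 i j (\<lambda>\<kappa>. Z (s - int i) (t - int j) r \<kappa> \<omega>)) r
      -` B \<inter> space M \<in> INMA_sigmas M q1 q2 eps Z (lag_index s t (Inr (\<sigma>, r)))" for \<sigma> r B
  proof (cases \<sigma>)
    case (Pair i j)
    then show ?thesis
      unfolding INMA_sigmas_def lag_index_def
      by (auto intro!: exI[of _ "joint_factor q1 q2 k l u1 u2 i j -` B"] simp: Zvec_def joint_factor_restrict)
  qed
  show "(case \<sigma> of (i, j) \<Rightarrow> \<lambda>r \<omega>. joint_factor q1 q2 k l u1 u2 i j (\<lambda>\<kappa>. Z (s - int i) (t - int j) r \<kappa> \<omega>)) r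
      \<in> borel_measurable M" for \<sigma> r
    by (cases \<sigma>) (simp add: joint_factor_def)
  show "\<bar>(case \<sigma> of (i, j) \<Rightarrow> \<lambda>r \<omega>. joint_factor q1 q2 k l u1 u2 i j (\<lambda>\<kappa>. Z (s - int i) (t - int j) r \<kappa> \<omega>)) r \<omega>\<bar>
      \<le> 1" for \<sigma> r \<omega>
    using assms by (simp add: case_prod_beta abs_joint_factor_le)
  show "expectation ((case \<sigma> of (i, j) \<Rightarrow> \<lambda>r \<omega>. joint_factor q1 q2 k l u1 u2 i j (\<lambda>\<kappa>. Z (s - int i) (t - int j) r \<kappa> \<omega>)) r)
      = (case \<sigma> of (i, j) \<Rightarrow> joint_coeff q1 q2 k l beta pair_prob u1 u2 i j)" if "1 \<le> r" for \<sigma> r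
    using that by (simp add: case_prod_beta expectation_joint_factor)
qed (simp_all add: prob_space_axioms case_prod_beta eps_measurable)

lemma bivariate_pgf_lag_boxes:
  assumes "\<bar>u1\<bar> \<le> 1" "\<bar>u2\<bar> \<le> 1"
  shows "(\<integral>\<omega>. u1 ^ INMA_field q1 q2 eps Z s t \<omega> * u2 ^ INMA_field q1 q2 eps Z (s - int k) (t - int l) \<omega> \<partial>M)
    = (\<Prod>(i, j)\<in>lag_box q1 q2 0 0 \<union> lag_box q1 q2 k l.
         pgf M (eps 0 0) (joint_coeff q1 q2 k l beta pair_prob u1 u2 i j))"
proof -
  define D where "D = lag_box q1 q2 0 0 \<union> lag_box q1 q2 k l"
  define N where "N = (\<lambda>(i, j). eps (s - int i) (t - int j))"
  define Y where "Y = (\<lambda>(i, j) r \<omega>. joint_factor q1 q2 k l u1 u2 i j (\<lambda>\<kappa>. Z (s - int i) (t - int j) r \<kappa> \<omega>))"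
  define c where "c = (\<lambda>(i, j). joint_coeff q1 q2 k l beta pair_prob u1 u2 i j)"
  interpret indep_random_products M "\<lambda>x. INMA_sigmas M q1 q2 eps Z (lag_index s t x)" D N Y c
    unfolding D_def N_def Y_def c_def using assms by (rule indep_random_products_lag_boxes)
  have "(\<integral>\<omega>. u1 ^ INMA_field q1 q2 eps Z s t \<omega> * u2 ^ INMA_field q1 q2 eps Z (s - int k) (t - int l) \<omega> \<partial>M)
      = (\<integral>\<omega>. (\<Prod>\<sigma>\<in>D. \<Prod>r\<in>{1..N \<sigma> \<omega>}. Y \<sigma> r \<omega>) \<partial>M)"
    by (simp add: power_INMA_field_pair D_def N_def Y_def case_prod_beta)
  also have "\<dots> = (\<Prod>\<sigma>\<in>D. pgf M (N \<sigma>) (c \<sigma>))"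
    by (rule integral_prod_random_products)
  also have "\<dots> = (\<Prod>\<sigma>\<in>D. pgf M (eps 0 0) (c \<sigma>))"
  proof (intro prod.cong refl pgf_cong_distribution)
    show "prob {\<omega> \<in> space M. N \<sigma> \<omega> = m} = prob {\<omega> \<in> space M. eps 0 0 \<omega> = m}" for \<sigma> m
      using eps_identical[of _ _ "{m}"] by (simp add: N_def case_prod_beta)
  qed (auto intro: N_measurable eps_measurable c_bounded)
  finally show ?thesis
    by (simp add: D_def c_def case_prod_beta)
qed

end

theorem theorem1:
  fixes M :: "'a measure" and q1 q2 k l :: nat and beta :: "nat \<Rightarrow> nat \<Rightarrow> real"
    and eps :: "int \<Rightarrow> int \<Rightarrow> 'a \<Rightarrow> nat"
    and Z :: "int \<Rightarrow> int \<Rightarrow> nat \<Rightarrow> nat \<times> nat \<Rightarrow> 'a \<Rightarrow> nat"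
    and s t :: int and u1 u2 :: real
  assumes ps: "prob_space M"
    and q: "q1 + q2 \<ge> 1"
    and beta_range: "\<And>i j. i \<le> q1 \<Longrightarrow> j \<le> q2 \<Longrightarrow> 0 \<le> beta i j \<and> beta i j \<le> 1"
    and eps_meas: "\<And>s t. eps s t \<in> measurable M (count_space UNIV)"
    and Z_meas: "\<And>s t r i j. Z s t r (i, j) \<in> measurable M (count_space UNIV)"
    and Z_01: "\<And>s t r i j \<omega>. \<omega> \<in> space M \<Longrightarrow> i \<le> q1 \<Longrightarrow> j \<le> q2 \<Longrightarrow> Z s t r (i, j) \<omega> \<in> {0, 1}"
    and Z_bern: "\<And>s t r i j. r \<ge> 1 \<Longrightarrow> i \<le> q1 \<Longrightarrow> j \<le> q2 \<Longrightarrow>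
                   measure M {\<omega> \<in> space M. Z s t r (i, j) \<omega> = 1} = beta i j"
    and eps_ident: "\<And>s t A. measure M {\<omega> \<in> space M. eps s t \<omega> \<in> A}
                              = measure M {\<omega> \<in> space M. eps 0 0 \<omega> \<in> A}"
    and Z_ident: "\<And>s t r B. r \<ge> 1 \<Longrightarrow> measure M {\<omega> \<in> space M. Zvec q1 q2 Z s t r \<omega> \<in> B}
                              = measure M {\<omega> \<in> space M. Zvec q1 q2 Z 0 0 1 \<omega> \<in> B}"
    and indep: "prob_space.indep_sets M (INMA_sigmas M q1 q2 eps Z)
                  (range Inl \<union> Inr ` {(s', t', r). r \<ge> 1})"
    and eps_mean: "integrable M (\<lambda>\<omega>. real (eps 0 0 \<omega>))"
    and eps_var: "integrable M (\<lambda>\<omega>. (real (eps 0 0 \<omega>))\<^sup>2)"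
    and kl: "k \<le> q1" "l \<le> q2"
    and u: "-1 \<le> u1" "u1 \<le> 1" "-1 \<le> u2" "u2 \<le> 1"
  shows "(\<integral>\<omega>. u1 ^ INMA_field q1 q2 eps Z s t \<omega>
               * u2 ^ INMA_field q1 q2 eps Z (s - int k) (t - int l) \<omega> \<partial>M) =
    (let P = pgf M (eps 0 0);
         p = (\<lambda>i j i' j'. measure M {\<omega> \<in> space M. Z 0 0 1 (i, j) \<omega> = 1 \<and> Z 0 0 1 (i', j') \<omega> = 1})
     in (\<Prod>i\<in>{0..<k}. \<Prod>j\<in>{0..q2}. P (1 + beta i j * (u1 - 1)))
      * (\<Prod>i\<in>{k..q1}. \<Prod>j\<in>{0..<l}. P (1 + beta i j * (u1 - 1)))
      * (\<Prod>i\<in>{q1+1..q1+k}. \<Prod>j\<in>{l..q2+l}. P (1 + beta (i - k) (j - l) * (u2 - 1)))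
      * (\<Prod>i\<in>{k..q1}. \<Prod>j\<in>{q2+1..q2+l}. P (1 + beta (i - k) (j - l) * (u2 - 1)))
      * (\<Prod>i\<in>{k..q1}. \<Prod>j\<in>{l..q2}.
           P (1 + beta i j * (u1 - 1) + beta (i - k) (j - l) * (u2 - 1)
                + p i j (i - k) (j - l) * (u1 - 1) * (u2 - 1))))"
proof -
  interpret INMA_model M q1 q2 beta eps Z
    using assms by (intro INMA_model.intro INMA_model_axioms.intro) blast+
  have u_bounded: "\<bar>u1\<bar> \<le> 1" "\<bar>u2\<bar> \<le> 1"
    using u by auto
  show ?thesis
    unfolding Let_def bivariate_pgf_lag_boxes[OF u_bounded] prod_lag_boxes_joint_coeff[OF kl] ..
qed

end
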